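(* Let $\varrho_0,\varrho\in\mathbb{R}$ with $0<\varrho_0<\varrho$, let $q\in\mathbb{N}$ with $q\ge2$, let $\boldsymbol{a}\subset\mathbb{N}_0\times\mathbb{N}$ be finite and, for $j\in\mathbb{N}$, let $\varnothing\ne\boldsymbol{a}_j\subseteq\boldsymbol{a}$, and suppose $m/n\le\varrho_0$ for all $(m,n)\in\boldsymbol{a}$. Then the relation $\prec$ on $\boldsymbol{a}$ given by $(m,n)\prec(m',n')$ iff either $m-n\varrho>m'-n'\varrho$, or $m-n\varrho=m'-n'\varrho$ and $n<n'$, is a strict linear order on $\boldsymbol{a}$. Let $(m_0,n_0)\in\boldsymbol{a}$ be $\prec$-minimal subject to the set $\{j\in\mathbb{N}\mid(m_0,n_0)\in\boldsymbol{a}_j\}$ being infinite, let $(k_j)_{j\in\mathbb{N}}$ be natural numbers with $|k_j/j-\varrho|\le1/j$ for all $j$, and set $f(j)=n_0k_j-m_0j$ if $j\ge(\varrho-\varrho_0)^{-1}$ and $f(j)=0$ otherwise. Then the Dirichlet series corresponding to the infinite product $\prod_{j\in\mathbb{N}}\bigl(1+\xi_{\boldsymbol{a}_j,q^j}\bigr)^{q^{f(j)}}$ has abscissa of convergence $\varrho$.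
   Context: For a finite set $\boldsymbol{b}\subset\mathbb{N}_0\times\mathbb{N}$ and $Q\in\mathbb{N}_{\ge2}$, $\xi_{\boldsymbol{b},Q}(s)=\sum_{(m,n)\in\boldsymbol{b}}Q^{m-ns}$, a Dirichlet polynomial. The abscissa of convergence of a Dirichlet series $\sum_n c_nn^{-s}$ with non-negative coefficients is the infimum of real $\sigma$ for which it converges at $s=\sigma$. *)

theory Defs
  imports "HOL-Analysis.Analysis"
begin

text \<open>Formal Dirichlet series with real coefficients are represented by their
coefficient functions nat \<Rightarrow> real (index 0 is irrelevant and always 0 here).\<close>

definition dconv :: "(nat \<Rightarrow> real) \<Rightarrow> (nat \<Rightarrow> real) \<Rightarrow> nat \<Rightarrow> real" where
  "dconv a b n = (\<Sum>d\<in>{d. d dvd n}. a d * b (n div d))"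

definition dunit :: "nat \<Rightarrow> real" where
  "dunit n = (if n = 1 then 1 else 0)"

fun dpow :: "(nat \<Rightarrow> real) \<Rightarrow> nat \<Rightarrow> nat \<Rightarrow> real" where
  "dpow a 0 = dunit"
| "dpow a (Suc k) = dconv a (dpow a k)"

text \<open>Coefficients of the Dirichlet polynomial xi_{b,Q}(s) = sum over (m,n) in b of
  Q^m (Q^n)^(-s).\<close>
definition xi_coeff :: "(nat \<times> nat) set \<Rightarrow> nat \<Rightarrow> nat \<Rightarrow> real" where
  "xi_coeff b Q N = (\<Sum>p\<in>{p\<in>b. Q ^ snd p = N}. real Q ^ fst p)"

definition one_plus_xi :: "(nat \<times> nat) set \<Rightarrow> nat \<Rightarrow> nat \<Rightarrow> real" where
  "one_plus_xi b Q N = dunit N + xi_coeff b Q N"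

fun dprod_upto :: "(nat \<Rightarrow> (nat \<times> nat) set) \<Rightarrow> nat \<Rightarrow> (nat \<Rightarrow> nat) \<Rightarrow> nat \<Rightarrow> nat \<Rightarrow> real" where
  "dprod_upto A q e 0 = dunit"
| "dprod_upto A q e (Suc J) = dconv (dprod_upto A q e J) (dpow (one_plus_xi (A (Suc J)) (q ^ Suc J)) (e (Suc J)))"

definition dprod_inf :: "(nat \<Rightarrow> (nat \<times> nat) set) \<Rightarrow> nat \<Rightarrow> (nat \<Rightarrow> nat) \<Rightarrow> nat \<Rightarrow> real" where
  "dprod_inf A q e N = lim (\<lambda>J. dprod_upto A q e J N)"

definition abscissa_conv :: "(nat \<Rightarrow> real) \<Rightarrow> ereal" where
  "abscissa_conv c = Inf (ereal ` {\<sigma>::real. summable (\<lambda>n. c n * real n powr (- \<sigma>))})"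

definition prec_rel :: "real \<Rightarrow> nat \<times> nat \<Rightarrow> nat \<times> nat \<Rightarrow> bool" where
  "prec_rel \<rho> x y \<longleftrightarrow>
     (real (fst x) - real (snd x) * \<rho> > real (fst y) - real (snd y) * \<rho>) \<or>
     (real (fst x) - real (snd x) * \<rho> = real (fst y) - real (snd y) * \<rho> \<and> snd x < snd y)"

end

theory Submission
  imports Defs
begin

(* The j-th factor (1 + xi_{A_j,q^j})^{e_j} agrees with the unit below q^j, so the N-th
   coefficient of the infinite product is already that of the N-th partial product.

   For sigma > rho the partial sums of the Dirichlet series are bounded by
   prod_j (1 + xi_{A_j,q^j}(sigma))^{e_j} <= exp (sum_j e_j xi_{A_j,q^j}(sigma)).  The weight
   e_j = q^{f(j)} is q^{j (n0 rho - m0)} up to a factor q^{+-n0}, and eventually only pairs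
   occurring in infinitely many A_j matter; by the choice of (m0, n0) these satisfy
   m - n rho <= m0 - n0 rho, so e_j xi_{A_j,q^j}(sigma) decays like q^{-j (sigma - rho)}.

   For sigma < rho, whenever (m0, n0) lies in A_j the coefficient at N = q^{j n0} is at least
   e_j q^{j m0}, so the N-th term of the series is at least q^{j n0 (rho - sigma) - n0}, which
   does not tend to 0. *)

definition dsum_upto :: "(nat \<Rightarrow> real) \<Rightarrow> real \<Rightarrow> nat \<Rightarrow> real" where
  "dsum_upto a \<sigma> M = (\<Sum>N\<in>{1..M}. a N * real N powr (-\<sigma>))"

lemma dconv_nonneg:
  assumes "\<And>n. a n \<ge> 0" "\<And>n. b n \<ge> 0"
  shows "dconv a b n \<ge> 0"
  unfolding dconv_def by (intro sum_nonneg mult_nonneg_nonneg assms)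

lemma dpow_nonneg: "(\<And>n. a n \<ge> 0) \<Longrightarrow> dpow a E n \<ge> 0"
  by (induction E arbitrary: n) (auto simp: dunit_def intro!: dconv_nonneg)

lemma dconv_ge_term:
  assumes "\<And>n. a n \<ge> 0" "\<And>n. b n \<ge> 0" "0 < n" "d dvd n"
  shows "a d * b (n div d) \<le> dconv a b n"
  unfolding dconv_def
  by (rule member_le_sum) (use assms finite_divisors_nat in auto)

lemma dconv_1: "dconv a b 1 = a 1 * b 1"
  unfolding dconv_def by simp

lemma dconv_unit_below_right:
  assumes "\<And>n. 0 < n \<Longrightarrow> n < Q \<Longrightarrow> b n = dunit n" "0 < N" "N < Q"
  shows "dconv a b N = a N"
proof -
  have "a d * b (N div d) = (if d = N then a N else 0)" if "d dvd N" for d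
  proof -
    have "0 < N div d" "N div d < Q"
      using that assms(2,3)
      by (auto simp: dvd_div_eq_0_iff intro: le_less_trans[OF div_le_dividend])
    then have "b (N div d) = dunit (N div d)" using assms(1) by simp
    moreover have "N div d = 1 \<longleftrightarrow> d = N" using that assms(2)
      by (metis div_self dvd_mult_div_cancel nat_mult_1_right less_not_refl2)
    ultimately show ?thesis by (auto simp: dunit_def)
  qed
  then have "dconv a b N = (\<Sum>d\<in>{d. d dvd N}. if d = N then a N else 0)"
    unfolding dconv_def by (intro sum.cong) auto
  also have "\<dots> = a N" using assms(2) by simp
  finally show ?thesis .
qed

lemma dpow_unit_below:
  assumes "\<And>n. 0 < n \<Longrightarrow> n < Q \<Longrightarrow> a n = dunit n" "0 < N" "N < Q"
  shows "dpow a E N = dunit N"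
  using assms(2,3)
proof (induction E arbitrary: N)
  case (Suc E)
  then show ?case using dconv_unit_below_right[of Q "dpow a E" N a] assms(1) by simp
qed simp

lemma dpow_1: "a 1 = 1 \<Longrightarrow> dpow a E 1 = 1"
  by (induction E) (simp_all add: dunit_def dconv_def)

lemma dpow_ge_linear:
  assumes "\<And>n. a n \<ge> 0" "a 1 = 1" "1 < N"
  shows "real E * a N \<le> dpow a E N"
proof (induction E)
  case 0
  then show ?case by (simp add: dunit_def)
next
  case (Suc E)
  have "(\<Sum>d\<in>{1, N}. a d * dpow a E (N div d)) \<le> dconv a (dpow a E) N"
    unfolding dconv_def using assms(3)
    by (intro sum_mono2) (auto intro!: mult_nonneg_nonneg dpow_nonneg assms(1))
  then have "dpow a E N + a N \<le> dpow a (Suc E) N"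
    using assms(2,3) dpow_1[of a E] by simp
  then show ?case using Suc by (simp add: algebra_simps)
qed

lemma dsum_upto_dunit_le: "dsum_upto dunit \<sigma> M \<le> 1"
proof -
  have "dsum_upto dunit \<sigma> M = (\<Sum>N\<in>{1..M}. if N = 1 then 1 else 0)"
    unfolding dsum_upto_def by (intro sum.cong) (auto simp: dunit_def)
  then show ?thesis by simp
qed

text \<open>The truncated convolution consists of the products \<open>d * e \<le> M\<close> of the truncated
  factors; the remaining products only add non-negative terms.\<close>
lemma dsum_upto_dconv_le:
  assumes a0: "\<And>n. a n \<ge> 0" and b0: "\<And>n. b n \<ge> 0"
  shows "dsum_upto (dconv a b) \<sigma> M \<le> dsum_upto a \<sigma> M * dsum_upto b \<sigma> M"
proof -
  define g where
    "g = (\<lambda>(d::nat, e::nat). a d * real d powr (-\<sigma>) * (b e * real e powr (-\<sigma>)))"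
  define S where "S = Sigma {1..M} (\<lambda>N. {d. d dvd N})"
  define T where "T = {(d, e). d \<in> {1..M} \<and> e \<in> {1..M} \<and> d * e \<le> M}"
  have split_term: "a d * b (N div d) * real N powr (-\<sigma>) = g (d, N div d)" if "d dvd N" for d N
  proof -
    have "real N = real d * real (N div d)" using that by (simp flip: of_nat_mult)
    then show ?thesis by (simp add: g_def powr_mult)
  qed
  have "dsum_upto (dconv a b) \<sigma> M = (\<Sum>N\<in>{1..M}. \<Sum>d\<in>{d. d dvd N}. g (d, N div d))"
    unfolding dsum_upto_def dconv_def sum_distrib_right
    by (intro sum.cong) (auto simp: split_term)
  also have "\<dots> = (\<Sum>(N, d)\<in>S. g (d, N div d))"
    unfolding S_def by (subst sum.Sigma) auto
  also have "\<dots> = sum g T"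
  proof (rule sum.reindex_bij_witness[where i = "\<lambda>(d, e). (d * e, d)"
                                          and j = "\<lambda>(N, d). (d, N div d)"])
    fix p assume "p \<in> S"
    then obtain N d where p: "p = (N, d)" "N \<in> {1..M}" "d dvd N" unfolding S_def by auto
    then have "0 < d" "d \<le> N" "0 < N div d" "N div d \<le> N"
      by (auto simp: dvd_div_eq_0_iff dvd_imp_le)
    with p show "(case p of (N, d) \<Rightarrow> (d, N div d)) \<in> T"
      unfolding T_def by (auto intro: le_trans[OF div_le_dividend])
  qed (auto simp: S_def T_def)
  also have "\<dots> \<le> sum g ({1..M} \<times> {1..M})"
    by (rule sum_mono2) (auto simp: T_def g_def intro!: mult_nonneg_nonneg a0 b0)
  also have "\<dots> = dsum_upto a \<sigma> M * dsum_upto b \<sigma> M"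
    unfolding g_def dsum_upto_def by (simp add: sum_product sum.cartesian_product)
  finally show ?thesis .
qed

lemma dsum_upto_nonneg: "(\<And>n. a n \<ge> 0) \<Longrightarrow> dsum_upto a \<sigma> M \<ge> 0"
  unfolding dsum_upto_def by (intro sum_nonneg mult_nonneg_nonneg) auto

lemma dsum_upto_dpow_le:
  assumes "\<And>n. a n \<ge> 0"
  shows "dsum_upto (dpow a E) \<sigma> M \<le> dsum_upto a \<sigma> M ^ E"
proof (induction E)
  case 0
  then show ?case using dsum_upto_dunit_le by simp
next
  case (Suc E)
  have "dsum_upto (dpow a (Suc E)) \<sigma> M \<le> dsum_upto a \<sigma> M * dsum_upto (dpow a E) \<sigma> M"
    using dsum_upto_dconv_le[OF assms dpow_nonneg[OF assms]] by simp
  also have "\<dots> \<le> dsum_upto a \<sigma> M * dsum_upto a \<sigma> M ^ E"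
    by (intro mult_left_mono Suc dsum_upto_nonneg assms)
  finally show ?case by simp
qed

definition xi_eval :: "(nat \<times> nat) set \<Rightarrow> nat \<Rightarrow> real \<Rightarrow> real" where
  "xi_eval b Q \<sigma> = (\<Sum>p\<in>b. real Q ^ fst p * real (Q ^ snd p) powr (-\<sigma>))"

lemma xi_eval_nonneg: "xi_eval b Q \<sigma> \<ge> 0"
  unfolding xi_eval_def by (intro sum_nonneg) auto

lemma xi_coeff_nonneg: "xi_coeff b Q N \<ge> 0"
  unfolding xi_coeff_def by (intro sum_nonneg) auto

lemma one_plus_xi_nonneg: "one_plus_xi b Q N \<ge> 0"
  unfolding one_plus_xi_def using xi_coeff_nonneg[of b Q N] by (simp add: dunit_def)

lemma xi_coeff_eq_0_below:
  assumes "\<forall>p\<in>b. snd p \<ge> 1" "N < Q"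
  shows "xi_coeff b Q N = 0"
proof -
  have "Q ^ snd p \<noteq> N" if "p \<in> b" for p
  proof -
    have "Q ^ 1 \<le> Q ^ snd p" using assms that by (intro power_increasing) auto
    then show ?thesis using assms(2) by simp
  qed
  then have "{p\<in>b. Q ^ snd p = N} = {}" by auto
  then show ?thesis unfolding xi_coeff_def by (simp only: sum.empty)
qed

lemma one_plus_xi_eq_dunit_below:
  "\<forall>p\<in>b. snd p \<ge> 1 \<Longrightarrow> N < Q \<Longrightarrow> one_plus_xi b Q N = dunit N"
  by (simp add: one_plus_xi_def xi_coeff_eq_0_below)

lemma one_plus_xi_1: "\<forall>p\<in>b. snd p \<ge> 1 \<Longrightarrow> 1 < Q \<Longrightarrow> one_plus_xi b Q 1 = 1"
  by (simp add: one_plus_xi_eq_dunit_below dunit_def)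

lemma xi_coeff_ge:
  assumes "finite b" "p \<in> b"
  shows "real Q ^ fst p \<le> xi_coeff b Q (Q ^ snd p)"
  unfolding xi_coeff_def
  by (rule member_le_sum[where f = "\<lambda>p. real Q ^ fst p", simplified]) (use assms in auto)

lemma dsum_upto_xi_coeff_le:
  assumes "finite b"
  shows "dsum_upto (xi_coeff b Q) \<sigma> M \<le> xi_eval b Q \<sigma>"
proof -
  define h where "h = (\<lambda>p::nat \<times> nat. real Q ^ fst p * real (Q ^ snd p) powr (-\<sigma>))"
  have "dsum_upto (xi_coeff b Q) \<sigma> M
      = (\<Sum>N\<in>{1..M}. sum h {p\<in>{p\<in>b. Q ^ snd p \<in> {1..M}}. Q ^ snd p = N})"
    unfolding dsum_upto_def xi_coeff_def sum_distrib_right h_def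
    by (intro sum.cong) auto
  also have "\<dots> = sum h {p\<in>b. Q ^ snd p \<in> {1..M}}"
    by (rule sum.group) (use assms in auto)
  also have "\<dots> \<le> sum h b"
    by (rule sum_mono2) (auto simp: h_def assms)
  finally show ?thesis unfolding xi_eval_def h_def .
qed

lemma dsum_upto_one_plus_xi_le:
  "finite b \<Longrightarrow> dsum_upto (one_plus_xi b Q) \<sigma> M \<le> 1 + xi_eval b Q \<sigma>"
  using dsum_upto_dunit_le[of \<sigma> M] dsum_upto_xi_coeff_le[of b Q \<sigma> M]
  unfolding dsum_upto_def one_plus_xi_def by (simp add: distrib_right sum.distrib)

lemma dprod_upto_nonneg: "dprod_upto A q e J N \<ge> 0"
  by (induction J arbitrary: N)
     (auto simp: dunit_def intro!: dconv_nonneg dpow_nonneg one_plus_xi_nonneg)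

lemma dsum_upto_dprod_upto_le:
  assumes "\<forall>j\<in>{1..J}. finite (A j)"
  shows "dsum_upto (dprod_upto A q e J) \<sigma> M
           \<le> (\<Prod>j\<in>{1..J}. (1 + xi_eval (A j) (q ^ j) \<sigma>) ^ e j)"
  using assms
proof (induction J)
  case 0
  then show ?case using dsum_upto_dunit_le by simp
next
  case (Suc J)
  let ?F = "one_plus_xi (A (Suc J)) (q ^ Suc J)"
  have "dsum_upto (dpow ?F (e (Suc J))) \<sigma> M \<le> dsum_upto ?F \<sigma> M ^ e (Suc J)"
    by (intro dsum_upto_dpow_le one_plus_xi_nonneg)
  also have "\<dots> \<le> (1 + xi_eval (A (Suc J)) (q ^ Suc J) \<sigma>) ^ e (Suc J)"
    using Suc.prems
    by (intro power_mono dsum_upto_one_plus_xi_le dsum_upto_nonneg one_plus_xi_nonneg) auto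
  finally have F: "dsum_upto (dpow ?F (e (Suc J))) \<sigma> M \<le> \<dots>" .
  have "dsum_upto (dprod_upto A q e (Suc J)) \<sigma> M
      \<le> dsum_upto (dprod_upto A q e J) \<sigma> M * dsum_upto (dpow ?F (e (Suc J))) \<sigma> M"
    by (simp add: dsum_upto_dconv_le dprod_upto_nonneg dpow_nonneg one_plus_xi_nonneg)
  also have "\<dots> \<le> (\<Prod>j\<in>{1..J}. (1 + xi_eval (A j) (q ^ j) \<sigma>) ^ e j)
                 * (1 + xi_eval (A (Suc J)) (q ^ Suc J) \<sigma>) ^ e (Suc J)"
    using Suc by (intro mult_mono F)
      (auto intro!: dsum_upto_nonneg dpow_nonneg one_plus_xi_nonneg prod_nonneg zero_le_power
        add_nonneg_nonneg xi_eval_nonneg)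
  finally show ?case by (simp add: prod.nat_ivl_Suc')
qed

lemma xi_term_eq_powr:
  assumes "0 < q"
  shows "real (q ^ j) ^ m * real ((q ^ j) ^ n) powr (-\<sigma>)
           = real q powr (real j * (real m - real n * \<sigma>))"
proof -
  have pow: "real ((q ^ j) ^ i) = real q powr (real j * real i)" for i
    using assms by (simp add: powr_realpow flip: power_mult of_nat_mult)
  have "real (q ^ j) ^ m * real ((q ^ j) ^ n) powr (-\<sigma>)
      = real q powr (real j * real m) * real q powr (real j * real n * -\<sigma>)"
    using pow[of m] pow[of n] by (simp add: powr_powr)
  also have "\<dots> = real q powr (real j * (real m - real n * \<sigma>))"
    by (simp add: algebra_simps flip: powr_add)
  finally show ?thesis .
qed

lemma eventually_all_recurrent:
  assumes "finite a" "\<forall>j\<ge>1. A j \<subseteq> a"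
  shows "eventually (\<lambda>j. \<forall>p\<in>A j. infinite {i. i \<ge> 1 \<and> p \<in> A i}) sequentially"
proof -
  define R where "R = {p\<in>a. finite {i. i \<ge> 1 \<and> p \<in> A i}}"
  have "\<forall>p\<in>R. eventually (\<lambda>j. \<not> (j \<ge> 1 \<and> p \<in> A j)) sequentially"
    unfolding R_def by (auto simp flip: cofinite_eq_sequentially simp: eventually_cofinite)
  then have "eventually (\<lambda>j. \<forall>p\<in>R. \<not> (j \<ge> 1 \<and> p \<in> A j)) sequentially"
    using assms(1) unfolding R_def by (intro eventually_ball_finite) auto
  with eventually_ge_at_top[of 1] show ?thesis
    by eventually_elim (use assms(2) in \<open>auto simp: R_def\<close>)
qed

lemma summable_weighted_xi_eval:
  fixes a :: "(nat \<times> nat) set" and q :: nat and e :: "nat \<Rightarrow> nat"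
  assumes q: "1 < q" and fin: "finite a" and sub: "\<forall>j\<ge>1. A j \<subseteq> a"
    and snd_ge_1: "\<forall>p\<in>a. snd p \<ge> 1"
    and recurrent: "\<forall>p\<in>a. infinite {j. j \<ge> 1 \<and> p \<in> A j}
                      \<longrightarrow> real (fst p) - real (snd p) * \<rho> \<le> -\<beta>"
    and weight: "eventually (\<lambda>j. real (e j) \<le> real q powr (real j * \<beta> + c)) sequentially"
    and "\<rho> < \<sigma>"
  shows "summable (\<lambda>j. real (e j) * xi_eval (A j) (q ^ j) \<sigma>)"
proof -
  have q0: "0 < q" using q by simp
  define r where "r = real q powr (-(\<sigma> - \<rho>))"
  have r: "0 < r" "r < 1" unfolding r_def using q \<open>\<rho> < \<sigma>\<close> by (auto intro: powr_less_one)
  have "eventually (\<lambda>j. norm (real (e j) * xi_eval (A j) (q ^ j) \<sigma>)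
                          \<le> real (card a) * (real q powr c * r ^ j)) sequentially"
    using eventually_all_recurrent[OF fin sub] weight eventually_ge_at_top[of 1]
  proof eventually_elim
    case (elim j)
    have term_le: "real (e j) * (real (q ^ j) ^ fst p * real ((q ^ j) ^ snd p) powr (-\<sigma>))
        \<le> real q powr c * r ^ j" if "p \<in> A j" for p
    proof -
      have p: "p \<in> a" "infinite {i. i \<ge> 1 \<and> p \<in> A i}" using elim that sub by auto
      have "real (fst p) - real (snd p) * \<sigma> \<le> -\<beta> - (\<sigma> - \<rho>)"
        using recurrent p snd_ge_1 \<open>\<rho> < \<sigma>\<close> mult_left_mono[of 1 "real (snd p)" "\<sigma> - \<rho>"]
        by (auto simp: algebra_simps)
      then have exponent: "real j * \<beta> + c + real j * (real (fst p) - real (snd p) * \<sigma>)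
          \<le> c + real j * (-(\<sigma> - \<rho>))"
        using mult_left_mono[of _ _ "real j"] by (fastforce simp: algebra_simps)
      have "real (e j) * (real (q ^ j) ^ fst p * real ((q ^ j) ^ snd p) powr (-\<sigma>))
          \<le> real q powr (real j * \<beta> + c)
             * real q powr (real j * (real (fst p) - real (snd p) * \<sigma>))"
        unfolding xi_term_eq_powr[OF q0] using elim by (simp add: mult_right_mono)
      also have "\<dots> \<le> real q powr (c + real j * (-(\<sigma> - \<rho>)))"
        using exponent q by (simp flip: powr_add add: powr_mono)
      also have "\<dots> = real q powr c * r ^ j"
        unfolding r_def powr_add using q0 by (simp add: powr_power)
      finally show ?thesis .
    qed
    have "real (e j) * xi_eval (A j) (q ^ j) \<sigma> \<le> real (card (A j)) * (real q powr c * r ^ j)"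
      unfolding xi_eval_def sum_distrib_left by (rule sum_bounded_above) (rule term_le)
    also have "\<dots> \<le> real (card a) * (real q powr c * r ^ j)"
      using fin sub elim r by (intro mult_right_mono) (auto intro: card_mono)
    finally show ?case by (simp add: xi_eval_nonneg)
  qed
  moreover have "summable (\<lambda>j. real (card a) * (real q powr c * r ^ j))"
    using r by (intro summable_mult summable_geometric) simp
  ultimately show ?thesis by (rule summable_comparison_test_ev)
qed

context
  fixes A :: "nat \<Rightarrow> (nat \<times> nat) set" and q :: nat and e :: "nat \<Rightarrow> nat"
  assumes q2: "q \<ge> 2" and snd_ge_1: "\<And>j p. j \<ge> 1 \<Longrightarrow> p \<in> A j \<Longrightarrow> snd p \<ge> 1"
begin

lemma factor_eq_dunit_below:
  "j \<ge> 1 \<Longrightarrow> 0 < N \<Longrightarrow> N < q ^ j \<Longrightarrow> dpow (one_plus_xi (A j) (q ^ j)) (e j) N = dunit N"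
  by (rule dpow_unit_below[where Q = "q ^ j"]) (use one_plus_xi_eq_dunit_below snd_ge_1 in auto)

lemma factor_1:
  assumes "j \<ge> 1"
  shows "dpow (one_plus_xi (A j) (q ^ j)) (e j) 1 = 1"
proof -
  have "1 < q ^ j" using q2 assms by (intro one_less_power) auto
  then show ?thesis using factor_eq_dunit_below[OF assms, of 1] by (simp add: dunit_def)
qed

lemma dprod_upto_1: "dprod_upto A q e J 1 = 1"
proof (induction J)
  case (Suc J)
  have "dprod_upto A q e (Suc J) 1
      = dprod_upto A q e J 1 * dpow (one_plus_xi (A (Suc J)) (q ^ Suc J)) (e (Suc J)) 1"
    by (simp only: dprod_upto.simps dconv_1)
  then show ?case using Suc.IH factor_1[of "Suc J"] by simp
qed (simp add: dunit_def)

lemma dprod_upto_stable: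
  assumes "0 < N" "N \<le> J"
  shows "dprod_upto A q e J N = dprod_upto A q e N N"
  using assms(2)
proof (induction J rule: dec_induct)
  case (step i)
  have "N < 2 ^ Suc i" using step less_exp[of "Suc i"] by linarith
  also have "\<dots> \<le> q ^ Suc i" using q2 by (intro power_mono) auto
  finally have "dconv (dprod_upto A q e i)
      (dpow (one_plus_xi (A (Suc i)) (q ^ Suc i)) (e (Suc i))) N = dprod_upto A q e i N"
    by (intro dconv_unit_below_right[where Q = "q ^ Suc i"] factor_eq_dunit_below assms(1)) auto
  then show ?case using step.IH by simp
qed simp

lemma dprod_inf_eq_dprod_upto:
  assumes "0 < N" "N \<le> J"
  shows "dprod_inf A q e N = dprod_upto A q e J N"
proof -
  have "(\<lambda>J. dprod_upto A q e J N) \<longlonglongrightarrow> dprod_upto A q e N N"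
    by (intro tendsto_eventually eventually_sequentiallyI[of N] dprod_upto_stable assms(1))
  then show ?thesis unfolding dprod_inf_def using dprod_upto_stable[OF assms] by (simp add: limI)
qed

lemma dprod_upto_mono:
  assumes "0 < N" "j \<le> J"
  shows "dprod_upto A q e j N \<le> dprod_upto A q e J N"
  using assms(2)
proof (induction J rule: dec_induct)
  case (step J)
  have "dprod_upto A q e J N * dpow (one_plus_xi (A (Suc J)) (q ^ Suc J)) (e (Suc J)) (N div N)
      \<le> dprod_upto A q e (Suc J) N"
    unfolding dprod_upto.simps
    by (intro dconv_ge_term) (use assms dprod_upto_nonneg dpow_nonneg one_plus_xi_nonneg in auto)
  then show ?case using step assms(1) factor_1[of "Suc J"] by simp
qed simp

lemma dprod_inf_ge_factor:
  assumes "1 \<le> j" "j \<le> N"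
  shows "dpow (one_plus_xi (A j) (q ^ j)) (e j) N \<le> dprod_inf A q e N"
proof -
  obtain i where i: "j = Suc i" using assms(1) by (cases j) auto
  have "dprod_upto A q e i 1 * dpow (one_plus_xi (A j) (q ^ j)) (e j) (N div 1)
      \<le> dprod_upto A q e j N"
    unfolding i dprod_upto.simps
    by (intro dconv_ge_term) (use assms dprod_upto_nonneg dpow_nonneg one_plus_xi_nonneg in auto)
  also have "\<dots> \<le> dprod_upto A q e N N" using assms by (intro dprod_upto_mono) auto
  finally show ?thesis using assms dprod_upto_1[of i] dprod_inf_eq_dprod_upto[of N N] by simp
qed

lemma less_power_power: "n \<ge> 1 \<Longrightarrow> j < (q ^ j) ^ n"
proof -
  assume "n \<ge> 1"
  have "j < 2 ^ j" by (rule less_exp)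
  also have "\<dots> \<le> q ^ j" using q2 by (intro power_mono) auto
  also have "\<dots> \<le> (q ^ j) ^ n"
    using \<open>n \<ge> 1\<close> q2 power_increasing[of 1 n "q ^ j"] by simp
  finally show ?thesis .
qed

lemma summable_dprod_inf:
  assumes "\<And>j. j \<ge> 1 \<Longrightarrow> finite (A j)"
    and "summable (\<lambda>j. real (e j) * xi_eval (A j) (q ^ j) \<sigma>)"
  shows "summable (\<lambda>N. dprod_inf A q e N * real N powr (-\<sigma>))"
proof (rule bounded_imp_summable)
  let ?t = "\<lambda>j. real (e j) * xi_eval (A j) (q ^ j) \<sigma>"
  show "0 \<le> dprod_inf A q e N * real N powr (-\<sigma>)" for N
    using dprod_inf_eq_dprod_upto[of N N] dprod_upto_nonneg[of A q e N N]
    by (cases "N = 0") auto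
  show "(\<Sum>N\<le>M. dprod_inf A q e N * real N powr (-\<sigma>)) \<le> exp (suminf ?t)" for M
  proof -
    have "{..M} = insert 0 {1..M}" by auto
    then have "(\<Sum>N\<le>M. dprod_inf A q e N * real N powr (-\<sigma>))
        = (\<Sum>N\<in>{1..M}. dprod_inf A q e N * real N powr (-\<sigma>))"
      by simp
    also have "\<dots> = dsum_upto (dprod_upto A q e M) \<sigma> M"
      unfolding dsum_upto_def by (intro sum.cong) (auto simp: dprod_inf_eq_dprod_upto)
    also have "\<dots> \<le> (\<Prod>j\<in>{1..M}. (1 + xi_eval (A j) (q ^ j) \<sigma>) ^ e j)"
      using assms(1) by (intro dsum_upto_dprod_upto_le) auto
    also have "\<dots> \<le> (\<Prod>j\<in>{1..M}. exp (?t j))"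
    proof (rule prod_mono)
      fix j
      have "(1 + xi_eval (A j) (q ^ j) \<sigma>) ^ e j \<le> exp (xi_eval (A j) (q ^ j) \<sigma>) ^ e j"
        by (intro power_mono exp_ge_add_one_self add_nonneg_nonneg xi_eval_nonneg) simp
      then show "0 \<le> (1 + xi_eval (A j) (q ^ j) \<sigma>) ^ e j
          \<and> (1 + xi_eval (A j) (q ^ j) \<sigma>) ^ e j \<le> exp (?t j)"
        by (simp add: xi_eval_nonneg flip: exp_of_nat_mult)
    qed
    also have "\<dots> = exp (sum ?t {1..M})" by (simp add: exp_sum)
    also have "\<dots> \<le> exp (suminf ?t)"
      using assms(2) by (simp add: sum_le_suminf xi_eval_nonneg)
    finally show ?thesis .
  qed
qed

lemma dprod_inf_ge_xi_term:
  assumes "finite (A j)" "j \<ge> 1" "(m, n) \<in> A j"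
  shows "real (e j) * real (q ^ j) ^ m \<le> dprod_inf A q e ((q ^ j) ^ n)"
proof -
  let ?F = "one_plus_xi (A j) (q ^ j)" and ?N = "(q ^ j) ^ n"
  have n: "n \<ge> 1" using snd_ge_1[OF assms(2,3)] by simp
  have jN: "j < ?N" by (rule less_power_power[OF n])
  have Q: "1 < q ^ j" using q2 assms(2) by (intro one_less_power) auto
  have "?F ?N = xi_coeff (A j) (q ^ j) ?N"
    using jN assms(2) n by (auto simp: one_plus_xi_def dunit_def)
  then have "real (q ^ j) ^ m \<le> ?F ?N"
    using xi_coeff_ge[OF assms(1,3), of "q ^ j"] by simp
  then have "real (e j) * real (q ^ j) ^ m \<le> real (e j) * ?F ?N" by (simp add: mult_left_mono)
  also have "\<dots> \<le> dpow ?F (e j) ?N"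
    using jN assms(2) snd_ge_1 Q
    by (intro dpow_ge_linear one_plus_xi_nonneg one_plus_xi_1) auto
  also have "\<dots> \<le> dprod_inf A q e ?N"
    using jN assms(2) by (intro dprod_inf_ge_factor) auto
  finally show ?thesis .
qed

lemma not_summable_dprod_inf:
  assumes "\<And>j. j \<ge> 1 \<Longrightarrow> finite (A j)" and "infinite {j. j \<ge> 1 \<and> (m, n) \<in> A j}"
    and "eventually (\<lambda>j. real q powr (real j * (real n * \<rho> - real m) - c) \<le> real (e j))
           sequentially"
    and "\<sigma> < \<rho>"
  shows "\<not> summable (\<lambda>N. dprod_inf A q e N * real N powr (-\<sigma>))"
proof
  let ?g = "\<lambda>N. dprod_inf A q e N * real N powr (-\<sigma>)"
  assume "summable ?g"
  then have "eventually (\<lambda>N. ?g N < real q powr (-c)) sequentially"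
    using q2 by (intro order_tendstoD(2)[OF summable_LIMSEQ_zero]) auto
  then obtain N0 where N0: "\<And>N. N \<ge> N0 \<Longrightarrow> ?g N < real q powr (-c)"
    by (auto simp: eventually_sequentially)
  have "frequently (\<lambda>j. j \<ge> 1 \<and> (m, n) \<in> A j) sequentially"
    using assms(2) by (simp add: frequently_cofinite flip: cofinite_eq_sequentially)
  from frequently_eventually_frequently[OF this
      eventually_conj[OF assms(3) eventually_ge_at_top[of N0]]]
  obtain j where j: "j \<ge> 1" "(m, n) \<in> A j" "j \<ge> N0"
    and weight: "real q powr (real j * (real n * \<rho> - real m) - c) \<le> real (e j)"
    by (auto dest: frequently_ex)
  have n: "n \<ge> 1" using snd_ge_1 j by force
  have q0: "0 < q" using q2 by simp
  let ?N = "(q ^ j) ^ n"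
  have "real j * real n * \<sigma> \<le> real j * real n * \<rho>"
    using \<open>\<sigma> < \<rho>\<close> by (intro mult_left_mono) auto
  then have "real q powr (-c)
      \<le> real q powr (real j * (real n * \<rho> - real m) - c + real j * (real m - real n * \<sigma>))"
    using q2 by (intro powr_mono) (auto simp: algebra_simps)
  also have "\<dots> \<le> real (e j) * (real (q ^ j) ^ m * real ?N powr (-\<sigma>))"
    unfolding xi_term_eq_powr[OF q0] using weight
    by (simp add: powr_add mult_right_mono)
  also have "\<dots> \<le> ?g ?N"
    using dprod_inf_ge_xi_term[OF assms(1)[OF j(1)] j(1,2)]
    by (simp add: mult.assoc[symmetric] mult_right_mono)
  finally show False using N0[of ?N] less_power_power[OF n, of j] j(3) by simp
qed

end

lemma eventually_weight_bounds:
  fixes q n0 m0 :: nat and k :: "nat \<Rightarrow> nat" and f :: "nat \<Rightarrow> int"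
  assumes q: "q \<ge> 1" and "\<rho>0 < \<rho>" and m0: "real m0 \<le> \<rho>0 * real n0"
    and k: "\<forall>j\<ge>1. \<bar>real (k j) / real j - \<rho>\<bar> \<le> 1 / real j"
    and f: "\<forall>j. f j = (if real j \<ge> 1 / (\<rho> - \<rho>0)
                      then int n0 * int (k j) - int m0 * int j else 0)"
  shows "eventually (\<lambda>j.
             real q powr (real j * (real n0 * \<rho> - real m0) - real n0) \<le> real (q ^ nat (f j))
           \<and> real (q ^ nat (f j)) \<le> real q powr (real j * (real n0 * \<rho> - real m0) + real n0))
           sequentially"
  using eventually_ge_at_top[of "nat \<lceil>1 / (\<rho> - \<rho>0)\<rceil> + 1"]
proof eventually_elim
  case (elim j)
  have j_large: "1 / (\<rho> - \<rho>0) \<le> real j" using elim by linarith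
  then have j: "j \<ge> 1" "1 \<le> real j * (\<rho> - \<rho>0)"
    using elim \<open>\<rho>0 < \<rho>\<close> by (auto simp: pos_divide_le_eq)
  have "\<bar>real (k j) - real j * \<rho>\<bar> = real j * \<bar>real (k j) / real j - \<rho>\<bar>"
    using j(1) by (simp add: abs_mult_pos[symmetric] field_simps)
  also have "\<dots> \<le> 1" using k j(1) by (simp add: field_simps)
  finally have "\<bar>real n0 * real (k j) - real n0 * (real j * \<rho>)\<bar> \<le> real n0"
    using mult_left_mono[of _ 1 "real n0"] by (simp add: abs_mult flip: right_diff_distrib)
  moreover have "real n0 \<le> real n0 * (real j * (\<rho> - \<rho>0))"
    using j(2) mult_left_mono[of 1 _ "real n0"] by simp
  moreover have "real m0 * real j \<le> \<rho>0 * real n0 * real j"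
    using m0 by (simp add: mult_right_mono)
  ultimately have f_nonneg: "0 \<le> real n0 * real (k j) - real m0 * real j"
    and f_bounds: "\<bar>(real n0 * real (k j) - real m0 * real j) - real j * (real n0 * \<rho> - real m0)\<bar>
                     \<le> real n0"
    by (auto simp: algebra_simps)
  have fj: "real_of_int (f j) = real n0 * real (k j) - real m0 * real j" using f j_large by simp
  then have "0 \<le> f j" using f_nonneg by (metis of_int_0_le_iff)
  have "real (q ^ nat (f j)) = real q powr real (nat (f j))" using q by (simp add: powr_realpow)
  also have "real (nat (f j)) = real n0 * real (k j) - real m0 * real j"
    using fj \<open>0 \<le> f j\<close> by simp
  finally have "real (q ^ nat (f j)) = real q powr (real n0 * real (k j) - real m0 * real j)" .
  with f_bounds q show ?case by (auto intro!: powr_mono)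
qed

lemma abscissa_conv_eqI:
  assumes "\<And>\<sigma>. \<rho> < \<sigma> \<Longrightarrow> summable (\<lambda>n. c n * real n powr (-\<sigma>))"
    and "\<And>\<sigma>. \<sigma> < \<rho> \<Longrightarrow> \<not> summable (\<lambda>n. c n * real n powr (-\<sigma>))"
  shows "abscissa_conv c = ereal \<rho>"
  unfolding abscissa_conv_def
proof (rule antisym)
  show "ereal \<rho> \<le> Inf (ereal ` {\<sigma>. summable (\<lambda>n. c n * real n powr (-\<sigma>))})"
    using assms(2) by (force intro: Inf_greatest)
  show "Inf (ereal ` {\<sigma>. summable (\<lambda>n. c n * real n powr (-\<sigma>))}) \<le> ereal \<rho>"
    unfolding Inf_le_iff
  proof (intro allI impI)
    fix y assume "ereal \<rho> < y"
    then obtain \<sigma> where "ereal \<rho> < ereal \<sigma>" "ereal \<sigma> < y"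
      by (meson ereal_dense2)
    with assms(1)[of \<sigma>] show "\<exists>z\<in>ereal ` {\<sigma>. summable (\<lambda>n. c n * real n powr (-\<sigma>))}. z < y"
      by auto
  qed
qed

lemma prec_rel_total:
  assumes "x \<noteq> y"
  shows "prec_rel \<rho> x y \<or> prec_rel \<rho> y x"
proof (cases "snd x = snd y")
  case True
  with assms have "fst x \<noteq> fst y" by (simp add: prod_eq_iff)
  with True show ?thesis by (auto simp: prec_rel_def linorder_neq_iff)
qed (auto simp: prec_rel_def linorder_neq_iff)

lemma prec_rel_strict_linear_order:
  "strict_linear_order_on a {(x, y). x \<in> a \<and> y \<in> a \<and> prec_rel \<rho> x y}"
  unfolding strict_linear_order_on_def trans_def irrefl_def total_on_def
  using prec_rel_total by (auto simp: prec_rel_def)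

theorem lemma5p2:
  fixes \<rho>0 \<rho> :: real and q m0 n0 :: nat
    and a :: "(nat \<times> nat) set" and A :: "nat \<Rightarrow> (nat \<times> nat) set"
    and k :: "nat \<Rightarrow> nat" and f :: "nat \<Rightarrow> int"
  assumes "0 < \<rho>0" and "\<rho>0 < \<rho>" and "q \<ge> 2"
    and "finite a" and "\<forall>p\<in>a. snd p \<ge> 1"
    and "\<forall>j\<ge>1. A j \<noteq> {} \<and> A j \<subseteq> a"
    and "\<forall>p\<in>a. real (fst p) / real (snd p) \<le> \<rho>0"
    and "(m0, n0) \<in> a"
    and "infinite {j. j \<ge> 1 \<and> (m0, n0) \<in> A j}"
    and "\<forall>p\<in>a. infinite {j. j \<ge> 1 \<and> p \<in> A j} \<longrightarrow> \<not> prec_rel \<rho> p (m0, n0)"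
    and "\<forall>j\<ge>1. k j \<ge> 1 \<and> \<bar>real (k j) / real j - \<rho>\<bar> \<le> 1 / real j"
    and "\<forall>j. f j = (if real j \<ge> 1 / (\<rho> - \<rho>0)
                    then int n0 * int (k j) - int m0 * int j else 0)"
  shows "strict_linear_order_on a {(x, y). x \<in> a \<and> y \<in> a \<and> prec_rel \<rho> x y}
         \<and> abscissa_conv (dprod_inf A q (\<lambda>j. q ^ nat (f j))) = ereal \<rho>"
proof -
  have subset: "\<forall>j\<ge>1. A j \<subseteq> a" using assms(6) by blast
  have snd_ge_1: "\<And>j p. j \<ge> 1 \<Longrightarrow> p \<in> A j \<Longrightarrow> snd p \<ge> 1" using assms(5) subset by blast
  have fin: "\<And>j. j \<ge> 1 \<Longrightarrow> finite (A j)" using assms(4) subset finite_subset by blast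
  have "real m0 \<le> \<rho>0 * real n0" using assms(5,7,8) by (force simp: divide_le_eq)
  then have weight: "eventually (\<lambda>j.
        real q powr (real j * (real n0 * \<rho> - real m0) - real n0) \<le> real (q ^ nat (f j))
      \<and> real (q ^ nat (f j)) \<le> real q powr (real j * (real n0 * \<rho> - real m0) + real n0))
      sequentially"
    using assms(2,3,11,12) by (intro eventually_weight_bounds) auto
  have recurrent: "\<forall>p\<in>a. infinite {j. j \<ge> 1 \<and> p \<in> A j}
      \<longrightarrow> real (fst p) - real (snd p) * \<rho> \<le> -(real n0 * \<rho> - real m0)"
    using assms(10) by (auto simp: prec_rel_def)
  have "abscissa_conv (dprod_inf A q (\<lambda>j. q ^ nat (f j))) = ereal \<rho>"
  proof (rule abscissa_conv_eqI)
    show "summable (\<lambda>N. dprod_inf A q (\<lambda>j. q ^ nat (f j)) N * real N powr (-\<sigma>))"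
      if "\<rho> < \<sigma>" for \<sigma>
      by (rule summable_dprod_inf[OF assms(3) snd_ge_1 fin
            summable_weighted_xi_eval[OF _ assms(4) subset assms(5) recurrent _ that]])
         (use assms(3) weight in \<open>auto elim: eventually_mono\<close>)
    show "\<not> summable (\<lambda>N. dprod_inf A q (\<lambda>j. q ^ nat (f j)) N * real N powr (-\<sigma>))"
      if "\<sigma> < \<rho>" for \<sigma>
      by (rule not_summable_dprod_inf[OF assms(3) snd_ge_1 fin assms(9) _ that])
         (use weight in \<open>auto elim: eventually_mono\<close>)
  qed
  with prec_rel_strict_linear_order show ?thesis by blast
qed

end
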